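(* For any simple undirected graph $G$, with $$\Lambda_1=\sum_{\{st,uv\}\in Q}\big(a_{su}(k_t+k_v)+a_{sv}(k_t+k_u)+a_{tu}(k_s+k_v)+a_{tv}(k_s+k_u)\big),\qquad \Lambda_2=\sum_{\{st,uv\}\in Q}(a_{su}+a_{sv}+a_{tu}+a_{tv})(k_s+k_t+k_u+k_v),$$ one has $$\Lambda_2=\Lambda_1+\sum_{st\in E}(k_s+k_t)\big((k_s-1)(k_t-1)-|c(s,t)|\big).$$
   Context: $a_{ij}$ adjacency entries, $k_x$ degree, $\Gamma(x)$ neighbourhood, $c(s,t)=\Gamma(s)\cap\Gamma(t)$. $Q$ is the set of unordered pairs $\{st,uv\}$ of edges with $s,t,u,v$ pairwise distinct. *)

theory Defs
  imports Main
begin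

definition simple_graph :: "'a set \<Rightarrow> ('a \<Rightarrow> 'a \<Rightarrow> bool) \<Rightarrow> bool" where
  "simple_graph V E \<longleftrightarrow> finite V \<and> (\<forall>x y. E x y \<longrightarrow> x \<in> V \<and> y \<in> V)
     \<and> (\<forall>x. \<not> E x x) \<and> (\<forall>x y. E x y \<longrightarrow> E y x)"

definition adj :: "('a \<Rightarrow> 'a \<Rightarrow> bool) \<Rightarrow> 'a \<Rightarrow> 'a \<Rightarrow> int" where
  "adj E x y = (if E x y then 1 else 0)"

definition nbhd :: "('a \<Rightarrow> 'a \<Rightarrow> bool) \<Rightarrow> 'a \<Rightarrow> 'a set" where
  "nbhd E x = {y. E x y}"

definition deg :: "('a \<Rightarrow> 'a \<Rightarrow> bool) \<Rightarrow> 'a \<Rightarrow> int" where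
  "deg E x = int (card (nbhd E x))"

definition common :: "('a \<Rightarrow> 'a \<Rightarrow> bool) \<Rightarrow> 'a \<Rightarrow> 'a \<Rightarrow> 'a set" where
  "common E s t = nbhd E s \<inter> nbhd E t"

definition edges :: "('a \<Rightarrow> 'a \<Rightarrow> bool) \<Rightarrow> 'a set set" where
  "edges E = {{s, t} | s t. E s t}"

definition Qpairs :: "('a \<Rightarrow> 'a \<Rightarrow> bool) \<Rightarrow> 'a set set set" where
  "Qpairs E = {{{s, t}, {u, v}} | s t u v. E s t \<and> E u v \<and> distinct [s, t, u, v]}"

text \<open>Endpoints of an edge (some labelling; summands below are symmetric).\<close>
definition edge_ends :: "('a \<Rightarrow> 'a \<Rightarrow> bool) \<Rightarrow> 'a set \<Rightarrow> 'a \<times> 'a" where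
  "edge_ends E e = (SOME (s, t). E s t \<and> e = {s, t})"

definition Q_labels :: "('a \<Rightarrow> 'a \<Rightarrow> bool) \<Rightarrow> 'a set set \<Rightarrow> 'a \<times> 'a \<times> 'a \<times> 'a" where
  "Q_labels E P = (SOME (s, t, u, v). E s t \<and> E u v \<and> distinct [s, t, u, v]
                      \<and> P = {{s, t}, {u, v}})"

definition Lambda1 :: "('a \<Rightarrow> 'a \<Rightarrow> bool) \<Rightarrow> int" where
  "Lambda1 E = (\<Sum>P\<in>Qpairs E. (case Q_labels E P of (s, t, u, v) \<Rightarrow>
      adj E s u * (deg E t + deg E v) + adj E s v * (deg E t + deg E u)
    + adj E t u * (deg E s + deg E v) + adj E t v * (deg E s + deg E u)))"

definition Lambda2 :: "('a \<Rightarrow> 'a \<Rightarrow> bool) \<Rightarrow> int" where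
  "Lambda2 E = (\<Sum>P\<in>Qpairs E. (case Q_labels E P of (s, t, u, v) \<Rightarrow>
      (adj E s u + adj E s v + adj E t u + adj E t v)
      * (deg E s + deg E t + deg E u + deg E v)))"

end

(* Expanding the product in Lambda2, the difference Lambda2 - Lambda1 is a sum over Q of the
   weights k_x + k_y of the four possible edges xy joining the two edges of a pair.  Exchanging
   the order of summation, an edge su joins the pair {st, uv} exactly when t \<in> \<Gamma>(s) - {u},
   v \<in> \<Gamma>(u) - {s} and t \<noteq> v, which leaves (k_s - 1)(k_u - 1) - |c(s,u)| choices.
   Since Q_labels and edge_ends pick arbitrary labellings, both sums are first lifted to labelled
   tuples: each element of Q has 8 labellings and each edge 2. *)
theory Submission
  imports Defs
begin

lemma sum_image_constant_fibres:
  fixes f :: "'a \<Rightarrow> 'b::comm_semiring_1"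
  assumes "finite A"
    and fibre_card: "\<And>x. x \<in> A \<Longrightarrow> card {y \<in> A. g y = g x} = n"
    and f_factors: "\<And>x. x \<in> A \<Longrightarrow> f x = F (g x)"
  shows "of_nat n * (\<Sum>P\<in>g ` A. F P) = (\<Sum>x\<in>A. f x)"
proof -
  have "(\<Sum>x\<in>A. f x) = (\<Sum>P\<in>g ` A. \<Sum>x\<in>{y \<in> A. g y = P}. f x)"
    using \<open>finite A\<close> by (rule sum.image_gen)
  also have "\<dots> = (\<Sum>P\<in>g ` A. of_nat n * F P)"
  proof (rule sum.cong[OF refl])
    fix P assume "P \<in> g ` A"
    then obtain x where "x \<in> A" "P = g x" by blast
    then show "(\<Sum>y\<in>{y \<in> A. g y = P}. f y) = of_nat n * F P"
      using fibre_card f_factors by simp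
  qed
  finally show ?thesis by (simp add: sum_distrib_left)
qed

lemma simple_graph_sym: "simple_graph V E \<Longrightarrow> E x y \<Longrightarrow> E y x"
  and simple_graph_irrefl: "simple_graph V E \<Longrightarrow> \<not> E x x"
  by (auto simp: simple_graph_def)

lemma simple_graph_finite_arcs: "simple_graph V E \<Longrightarrow> finite {(s, t). E s t}"
  by (rule finite_subset[of _ "V \<times> V"]) (auto simp: simple_graph_def)

lemma adj_commute: "simple_graph V E \<Longrightarrow> adj E x y = adj E y x"
  by (auto simp: adj_def dest: simple_graph_sym)

lemma edges_eq_image: "edges E = (\<lambda>(s, t). {s, t}) ` {(s, t). E s t}"
  by (auto simp: edges_def)

lemma edge_ends_spec:
  assumes "E s t"
  shows "case edge_ends E {s, t} of (a, b) \<Rightarrow> E a b \<and> {s, t} = {a, b}"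
  unfolding edge_ends_def by (rule someI[of _ "(s, t)"]) (use assms in auto)

lemma sum_edges_symmetric:
  fixes h :: "'a \<Rightarrow> 'a \<Rightarrow> 'b::comm_semiring_1"
  assumes G: "simple_graph V E" and h_commute: "\<And>s t. h s t = h t s"
  shows "2 * (\<Sum>e\<in>edges E. case edge_ends E e of (s, t) \<Rightarrow> h s t)
       = (\<Sum>(s, t)\<in>{(s, t). E s t}. h s t)"
proof -
  have "of_nat 2 * (\<Sum>e\<in>(\<lambda>(s, t). {s, t}) ` {(s, t). E s t}. case edge_ends E e of (s, t) \<Rightarrow> h s t)
       = (\<Sum>(s, t)\<in>{(s, t). E s t}. h s t)"
  proof (rule sum_image_constant_fibres[OF simple_graph_finite_arcs[OF G]])
    fix x assume "x \<in> {(s, t). E s t}"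
    then obtain s t where x: "x = (s, t)" and "E s t" by blast
    have "s \<noteq> t" using simple_graph_irrefl[OF G] \<open>E s t\<close> by blast
    have "{y \<in> {(s, t). E s t}. (case y of (s, t) \<Rightarrow> {s, t}) = {s, t}} = {(s, t), (t, s)}"
      using \<open>E s t\<close> simple_graph_sym[OF G] by (auto simp: doubleton_eq_iff)
    then show "card {y \<in> {(s, t). E s t}. (case y of (s, t) \<Rightarrow> {s, t}) = (case x of (s, t) \<Rightarrow> {s, t})} = 2"
      using \<open>s \<noteq> t\<close> by (simp add: x)
  next
    fix x assume "x \<in> {(s, t). E s t}"
    then obtain s t where x: "x = (s, t)" and "E s t" by blast
    then show "(case x of (s, t) \<Rightarrow> h s t)
        = (case edge_ends E (case x of (s, t) \<Rightarrow> {s, t}) of (s, t) \<Rightarrow> h s t)"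
      using edge_ends_spec[of E s t] h_commute by (auto simp: doubleton_eq_iff split: prod.splits)
  qed
  then show ?thesis by (simp add: edges_eq_image)
qed

definition Q_tuples :: "('a \<Rightarrow> 'a \<Rightarrow> bool) \<Rightarrow> ('a \<times> 'a \<times> 'a \<times> 'a) set" where
  "Q_tuples E = {(s, t, u, v). E s t \<and> E u v \<and> distinct [s, t, u, v]}"

definition edge_pair :: "'a \<times> 'a \<times> 'a \<times> 'a \<Rightarrow> 'a set set" where
  "edge_pair = (\<lambda>(s, t, u, v). {{s, t}, {u, v}})"

definition relabellings :: "'a \<Rightarrow> 'a \<Rightarrow> 'a \<Rightarrow> 'a \<Rightarrow> ('a \<times> 'a \<times> 'a \<times> 'a) set" where
  "relabellings s t u v = {(s, t, u, v), (t, s, u, v), (s, t, v, u), (t, s, v, u),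
                           (u, v, s, t), (v, u, s, t), (u, v, t, s), (v, u, t, s)}"

lemma Qpairs_eq_image: "Qpairs E = edge_pair ` Q_tuples E"
  by (auto simp: Qpairs_def Q_tuples_def edge_pair_def image_iff)

lemma finite_Q_tuples: "simple_graph V E \<Longrightarrow> finite (Q_tuples E)"
  by (rule finite_subset[of _ "V \<times> V \<times> V \<times> V"]) (auto simp: simple_graph_def Q_tuples_def)

lemma card_relabellings: "distinct [s, t, u, v] \<Longrightarrow> card (relabellings s t u v) = 8"
  by (simp add: relabellings_def)

lemma edge_pair_eq_iff_relabelling:
  "distinct [a, b, c, d] \<Longrightarrow> edge_pair y = edge_pair (a, b, c, d) \<longleftrightarrow> y \<in> relabellings a b c d"
  by (cases y) (auto simp: edge_pair_def relabellings_def doubleton_eq_iff)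

lemma Q_tuples_fibre:
  assumes "simple_graph V E" "(a, b, c, d) \<in> Q_tuples E"
  shows "{y \<in> Q_tuples E. edge_pair y = edge_pair (a, b, c, d)} = relabellings a b c d"
  using assms edge_pair_eq_iff_relabelling[of a b c d]
  by (auto simp: Q_tuples_def relabellings_def dest: simple_graph_sym)

lemma Q_labels_spec:
  assumes "x \<in> Q_tuples E"
  shows "Q_labels E (edge_pair x) \<in> Q_tuples E \<and> edge_pair (Q_labels E (edge_pair x)) = edge_pair x"
proof -
  obtain s t u v where x: "x = (s, t, u, v)" "E s t" "E u v" "distinct [s, t, u, v]"
    using assms by (auto simp: Q_tuples_def)
  have "case Q_labels E {{s, t}, {u, v}} of (a, b, c, d) \<Rightarrow>
      E a b \<and> E c d \<and> distinct [a, b, c, d] \<and> {{s, t}, {u, v}} = {{a, b}, {c, d}}"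
    unfolding Q_labels_def by (rule someI[of _ "(s, t, u, v)"]) (use x in auto)
  then show ?thesis
    by (auto simp: x edge_pair_def Q_tuples_def split: prod.splits)
qed

lemma sum_Q_tuples_swap_first:
  assumes "simple_graph V E"
  shows "(\<Sum>(s, t, u, v)\<in>Q_tuples E. f s t u v) = (\<Sum>(s, t, u, v)\<in>Q_tuples E. f t s u v)"
  by (rule sum.reindex_bij_witness[of _ "\<lambda>(s, t, u, v). (t, s, u, v)" "\<lambda>(s, t, u, v). (t, s, u, v)"])
     (auto simp: Q_tuples_def dest: simple_graph_sym[OF assms])

lemma sum_Q_tuples_swap_second:
  assumes "simple_graph V E"
  shows "(\<Sum>(s, t, u, v)\<in>Q_tuples E. f s t u v) = (\<Sum>(s, t, u, v)\<in>Q_tuples E. f s t v u)"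
  by (rule sum.reindex_bij_witness[of _ "\<lambda>(s, t, u, v). (s, t, v, u)" "\<lambda>(s, t, u, v). (s, t, v, u)"])
     (auto simp: Q_tuples_def dest: simple_graph_sym[OF assms])

lemma invariant_on_relabellings:
  assumes "y \<in> relabellings a b c d"
    and "\<And>s t u v. f s t u v = f t s u v"
    and "\<And>s t u v. f s t u v = f s t v u"
    and "\<And>s t u v. f s t u v = f u v s t"
  shows "(case y of (s, t, u, v) \<Rightarrow> f s t u v) = f a b c d"
  using assms unfolding relabellings_def by auto

lemma sum_Qpairs_symmetric:
  fixes f :: "'a \<Rightarrow> 'a \<Rightarrow> 'a \<Rightarrow> 'a \<Rightarrow> 'b::comm_semiring_1"
  assumes G: "simple_graph V E"
    and "\<And>s t u v. f s t u v = f t s u v"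
    and "\<And>s t u v. f s t u v = f s t v u"
    and "\<And>s t u v. f s t u v = f u v s t"
  shows "8 * (\<Sum>P\<in>Qpairs E. case Q_labels E P of (s, t, u, v) \<Rightarrow> f s t u v)
       = (\<Sum>(s, t, u, v)\<in>Q_tuples E. f s t u v)"
proof -
  have "of_nat 8 * (\<Sum>P\<in>edge_pair ` Q_tuples E. case Q_labels E P of (s, t, u, v) \<Rightarrow> f s t u v)
       = (\<Sum>(s, t, u, v)\<in>Q_tuples E. f s t u v)"
  proof (rule sum_image_constant_fibres[OF finite_Q_tuples[OF G]])
    fix x assume x: "x \<in> Q_tuples E"
    obtain a b c d where x_eq: "x = (a, b, c, d)" by (cases x)
    have "distinct [a, b, c, d]" using x by (simp add: x_eq Q_tuples_def)
    then show "card {y \<in> Q_tuples E. edge_pair y = edge_pair x} = 8"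
      using Q_tuples_fibre[OF G x[unfolded x_eq]] by (simp add: x_eq card_relabellings)
    obtain s t u v where labels: "Q_labels E (edge_pair x) = (s, t, u, v)"
      by (cases "Q_labels E (edge_pair x)")
    have "x \<in> relabellings s t u v"
      using Q_labels_spec[OF x] Q_tuples_fibre[OF G] x unfolding labels by blast
    then show "(case x of (s, t, u, v) \<Rightarrow> f s t u v)
        = (case Q_labels E (edge_pair x) of (s, t, u, v) \<Rightarrow> f s t u v)"
      unfolding labels using assms(2-4) by (simp add: invariant_on_relabellings)
  qed
  then show ?thesis by (simp add: Qpairs_eq_image)
qed

definition cross_completions :: "('a \<Rightarrow> 'a \<Rightarrow> bool) \<Rightarrow> 'a \<Rightarrow> 'a \<Rightarrow> ('a \<times> 'a) set" where
  "cross_completions E s u = {(t, v). E s t \<and> E u v \<and> distinct [s, t, u, v]}"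

lemma finite_nbhd: "simple_graph V E \<Longrightarrow> finite (nbhd E x)"
  by (rule finite_subset[of _ V]) (auto simp: simple_graph_def nbhd_def)

lemma finite_cross_completions: "simple_graph V E \<Longrightarrow> finite (cross_completions E s u)"
  by (rule finite_subset[of _ "V \<times> V"]) (auto simp: simple_graph_def cross_completions_def)

lemma card_cross_completions:
  assumes G: "simple_graph V E" and "E s u"
  shows "int (card (cross_completions E s u))
       = (deg E s - 1) * (deg E u - 1) - int (card (common E s u))"
proof -
  let ?pairs = "(nbhd E s - {u}) \<times> (nbhd E u - {s})"
  let ?diagonal = "(\<lambda>t. (t, t)) ` common E s u"
  have irrefl: "\<And>x. \<not> E x x" using simple_graph_irrefl[OF G] .
  have "u \<in> nbhd E s" "s \<in> nbhd E u"
    using \<open>E s u\<close> simple_graph_sym[OF G] by (auto simp: nbhd_def)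
  moreover have "finite (nbhd E s)" "finite (nbhd E u)" using finite_nbhd[OF G] by auto
  ultimately have "card (nbhd E s) \<ge> 1" "card (nbhd E u) \<ge> 1"
    by (auto simp: Suc_le_eq card_gt_0_iff)
  then have card_pairs: "int (card ?pairs) = (deg E s - 1) * (deg E u - 1)"
    using \<open>u \<in> nbhd E s\<close> \<open>s \<in> nbhd E u\<close> \<open>finite (nbhd E s)\<close> \<open>finite (nbhd E u)\<close>
    by (simp add: deg_def card_cartesian_product of_nat_diff)
  have diagonal_subset: "?diagonal \<subseteq> ?pairs"
    using irrefl by (auto simp: nbhd_def common_def)
  have "cross_completions E s u = ?pairs - ?diagonal"
    using irrefl \<open>E s u\<close> by (auto simp: cross_completions_def nbhd_def common_def)
  then have "card (cross_completions E s u) = card ?pairs - card ?diagonal"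
    using diagonal_subset \<open>finite (nbhd E s)\<close> \<open>finite (nbhd E u)\<close>
    by (simp add: card_Diff_subset finite_subset)
  moreover have "card ?diagonal \<le> card ?pairs"
    using diagonal_subset \<open>finite (nbhd E s)\<close> \<open>finite (nbhd E u)\<close>
    by (intro card_mono) auto
  moreover have "card ?diagonal = card (common E s u)"
    by (rule card_image) (auto simp: inj_on_def)
  ultimately show ?thesis using card_pairs by simp
qed

lemma sum_Q_tuples_cross_edge:
  fixes w :: "'a \<Rightarrow> 'a \<Rightarrow> int"
  assumes G: "simple_graph V E"
  shows "(\<Sum>(s, t, u, v)\<in>Q_tuples E. adj E s u * w s u)
       = (\<Sum>(s, u)\<in>{(s, u). E s u}. int (card (cross_completions E s u)) * w s u)"
proof -
  have "(\<Sum>(s, t, u, v)\<in>Q_tuples E. adj E s u * w s u)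
      = (\<Sum>x\<in>Q_tuples E. if (case x of (s, t, u, v) \<Rightarrow> E s u)
                               then (case x of (s, t, u, v) \<Rightarrow> w s u) else 0)"
    by (rule sum.cong) (auto simp: adj_def)
  also have "\<dots> = (\<Sum>(s, t, u, v)\<in>{x \<in> Q_tuples E. case x of (s, t, u, v) \<Rightarrow> E s u}. w s u)"
    by (rule sum.inter_filter[symmetric, OF finite_Q_tuples[OF G]])
  also have "\<dots> = (\<Sum>(p, q)\<in>Sigma {(s, u). E s u} (\<lambda>(s, u). cross_completions E s u). w (fst p) (snd p))"
    by (rule sum.reindex_bij_witness[of _ "\<lambda>((s, u), (t, v)). (s, t, u, v)" "\<lambda>(s, t, u, v). ((s, u), (t, v))"])
       (auto simp: Q_tuples_def cross_completions_def)
  also have "\<dots> = (\<Sum>p\<in>{(s, u). E s u}. \<Sum>q\<in>(\<lambda>(s, u). cross_completions E s u) p. w (fst p) (snd p))"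
    by (rule sum.Sigma[symmetric])
       (use simple_graph_finite_arcs[OF G] finite_cross_completions[OF G] in auto)
  finally show ?thesis by (simp add: case_prod_beta)
qed

lemma sum_Q_tuples_cross_pairs:
  fixes w :: "'a \<Rightarrow> 'a \<Rightarrow> 'b::comm_semiring_1"
  assumes G: "simple_graph V E"
  shows "(\<Sum>(s, t, u, v)\<in>Q_tuples E. w s u + w s v + w t u + w t v)
       = 4 * (\<Sum>(s, t, u, v)\<in>Q_tuples E. w s u)"
proof -
  let ?S = "\<lambda>f. \<Sum>(s, t, u, v)\<in>Q_tuples E. f s t u v"
  have sv: "?S (\<lambda>s t u v. w s v) = ?S (\<lambda>s t u v. w s u)"
    by (rule sum_Q_tuples_swap_second[OF G])
  have tu: "?S (\<lambda>s t u v. w t u) = ?S (\<lambda>s t u v. w s u)"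
    by (rule sum_Q_tuples_swap_first[OF G])
  have tv: "?S (\<lambda>s t u v. w t v) = ?S (\<lambda>s t u v. w s u)"
    using sum_Q_tuples_swap_first[OF G, of "\<lambda>s t u v. w s v"] sv by simp
  have "?S (\<lambda>s t u v. w s u + w s v + w t u + w t v)
      = ?S (\<lambda>s t u v. w s u) + ?S (\<lambda>s t u v. w s v) + ?S (\<lambda>s t u v. w t u) + ?S (\<lambda>s t u v. w t v)"
    by (simp add: sum.distrib case_prod_beta)
  also have "\<dots> = 4 * ?S (\<lambda>s t u v. w s u)"
  proof -
    have "(4::'b) = 1 + 1 + 1 + 1" by simp
    then have "x + x + x + x = 4 * x" for x :: 'b by (simp only: distrib_right mult_1_left)
    then show ?thesis unfolding sv tu tv .
  qed
  finally show ?thesis .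
qed

definition cross_weight :: "('a \<Rightarrow> 'a \<Rightarrow> bool) \<Rightarrow> 'a \<Rightarrow> 'a \<Rightarrow> int" where
  "cross_weight E x y = adj E x y * (deg E x + deg E y)"

lemma Lambda2_minus_Lambda1:
  "Lambda2 E - Lambda1 E = (\<Sum>P\<in>Qpairs E. case Q_labels E P of (s, t, u, v) \<Rightarrow>
     cross_weight E s u + cross_weight E s v + cross_weight E t u + cross_weight E t v)"
  unfolding Lambda2_def Lambda1_def cross_weight_def sum_subtractf[symmetric]
  by (rule sum.cong) (simp_all split: prod.split add: algebra_simps)

theorem proposition15:
  fixes V :: "'a set" and E :: "'a \<Rightarrow> 'a \<Rightarrow> bool"
  assumes "simple_graph V E"
  shows "Lambda2 E = Lambda1 E +
    (\<Sum>e\<in>edges E. (case edge_ends E e of (s, t) \<Rightarrow>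
        (deg E s + deg E t) * ((deg E s - 1) * (deg E t - 1) - int (card (common E s t)))))"
proof -
  note G = assms
  define h where "h s t = (deg E s + deg E t) * ((deg E s - 1) * (deg E t - 1) - int (card (common E s t)))"
    for s t
  have "8 * (Lambda2 E - Lambda1 E) = (\<Sum>(s, t, u, v)\<in>Q_tuples E.
      cross_weight E s u + cross_weight E s v + cross_weight E t u + cross_weight E t v)"
    unfolding Lambda2_minus_Lambda1
    by (rule sum_Qpairs_symmetric[OF G]) (auto simp: cross_weight_def adj_commute[OF G] algebra_simps)
  also have "\<dots> = 4 * (\<Sum>(s, t, u, v)\<in>Q_tuples E. cross_weight E s u)"
    by (rule sum_Q_tuples_cross_pairs[OF G])
  also have "\<dots> = 4 * (\<Sum>(s, u)\<in>{(s, u). E s u}. h s u)"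
    using sum_Q_tuples_cross_edge[OF G, of "\<lambda>s u. deg E s + deg E u"]
    by (simp add: cross_weight_def case_prod_beta card_cross_completions[OF G] h_def mult.commute)
  also have "\<dots> = 8 * (\<Sum>e\<in>edges E. case edge_ends E e of (s, t) \<Rightarrow> h s t)"
    using sum_edges_symmetric[OF G, of h] by (simp add: h_def common_def Int_commute algebra_simps)
  finally show ?thesis unfolding h_def by simp
qed

end
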